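(* Let $p$ be a prime and let $Q\in\mathbb{Q}_p[X_1,\dots,X_n]$ be a nonsingular quadratic form which is isotropic over $\mathbb{Q}_p$. Then $R(Q(\mathbb{Z}_p^n))=\mathbb{Q}_p$. In particular, $R(Q(\mathbb{Z}^n))$ is dense in $\mathbb{Q}_p$.
   Context: A quadratic form $Q=\sum_{i,j}a_{ij}X_iX_j$ ($a_{ij}=a_{ji}$, not all zero) is nonsingular if $\det[a_{ij}]\neq 0$; it is isotropic over $\mathbb{Q}_p$ if $Q(\mathbf{x})=0$ for some nonzero $\mathbf{x}\in\mathbb{Q}_p^n$. $\mathbb{Z}_p$ denotes the $p$-adic integers. For a subset $A$ of a field, $R(A)=\{a/b: a,b\in A,\ b\neq 0\}$. For $S\subseteq\mathbb{Q}_p^n$, $Q(S)=\{Q(\mathbf{x}):\mathbf{x}\in S\}$. *)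

theory Defs
  imports "HOL-Analysis.Analysis" "HOL-Computational_Algebra.Computational_Algebra"
begin

text \<open>The p-adic numbers are modelled as the completion of the rationals with
respect to the p-adic absolute value: an element of Q_p is represented by a
p-adically Cauchy sequence of rationals, and two representatives denote the same
element iff their difference is a p-adic null sequence. All field operations act
pointwise on representatives. Z_p is the closure of Z, i.e. its elements are
represented by p-adically Cauchy sequences of integers.\<close>

definition padic_val :: "nat \<Rightarrow> rat \<Rightarrow> int" where
  "padic_val p r = (case quotient_of r of (a, b) \<Rightarrow>
      int (multiplicity (int p) a) - int (multiplicity (int p) b))"

definition padic_norm :: "nat \<Rightarrow> rat \<Rightarrow> real" where
  "padic_norm p r = (if r = 0 then 0 else real p powr (- real_of_int (padic_val p r)))"

definition pcauchy :: "nat \<Rightarrow> (nat \<Rightarrow> rat) \<Rightarrow> bool" where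
  "pcauchy p X \<longleftrightarrow> (\<forall>e>0. \<exists>N. \<forall>m\<ge>N. \<forall>k\<ge>N. padic_norm p (X m - X k) < e)"

definition pnull :: "nat \<Rightarrow> (nat \<Rightarrow> rat) \<Rightarrow> bool" where
  "pnull p X \<longleftrightarrow> (\<forall>e>0. \<exists>N. \<forall>k\<ge>N. padic_norm p (X k) < e)"

definition peq :: "nat \<Rightarrow> (nat \<Rightarrow> rat) \<Rightarrow> (nat \<Rightarrow> rat) \<Rightarrow> bool" where
  "peq p X Y \<longleftrightarrow> pnull p (\<lambda>k. X k - Y k)"

definition Qp :: "nat \<Rightarrow> (nat \<Rightarrow> rat) set" where
  "Qp p = {X. pcauchy p X}"

definition Zp :: "nat \<Rightarrow> (nat \<Rightarrow> rat) set" where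
  "Zp p = {X. pcauchy p X \<and> (\<forall>k. X k \<in> \<int>)}"

definition Qp_norm :: "nat \<Rightarrow> (nat \<Rightarrow> rat) \<Rightarrow> real" where
  "Qp_norm p X = lim (\<lambda>k. padic_norm p (X k))"

definition pdiv :: "(nat \<Rightarrow> rat) \<Rightarrow> (nat \<Rightarrow> rat) \<Rightarrow> (nat \<Rightarrow> rat)" where
  "pdiv X Y = (\<lambda>k. X k / Y k)"

definition qform :: "('n::finite \<Rightarrow> 'n \<Rightarrow> nat \<Rightarrow> rat) \<Rightarrow> ('n \<Rightarrow> nat \<Rightarrow> rat) \<Rightarrow> nat \<Rightarrow> rat" where
  "qform A x = (\<lambda>k. \<Sum>i\<in>UNIV. \<Sum>j\<in>UNIV. A i j k * x i k * x j k)"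

definition qdet :: "('n::finite \<Rightarrow> 'n \<Rightarrow> nat \<Rightarrow> rat) \<Rightarrow> nat \<Rightarrow> rat" where
  "qdet A = (\<lambda>k. det (\<chi> i j. A i j k))"

definition is_qform :: "nat \<Rightarrow> ('n::finite \<Rightarrow> 'n \<Rightarrow> nat \<Rightarrow> rat) \<Rightarrow> bool" where
  "is_qform p A \<longleftrightarrow> (\<forall>i j. A i j \<in> Qp p) \<and> (\<forall>i j. peq p (A i j) (A j i))
      \<and> (\<exists>i j. \<not> pnull p (A i j))"

definition nonsingular :: "nat \<Rightarrow> ('n::finite \<Rightarrow> 'n \<Rightarrow> nat \<Rightarrow> rat) \<Rightarrow> bool" where
  "nonsingular p A \<longleftrightarrow> \<not> pnull p (qdet A)"

definition isotropic :: "nat \<Rightarrow> ('n::finite \<Rightarrow> 'n \<Rightarrow> nat \<Rightarrow> rat) \<Rightarrow> bool" where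
  "isotropic p A \<longleftrightarrow> (\<exists>x. (\<forall>i. x i \<in> Qp p) \<and> (\<exists>i. \<not> pnull p (x i)) \<and> pnull p (qform A x))"

end

theory Submission
  imports Defs
begin

(* A nonsingular isotropic form Q is universal over Q_p. If Q(x) = 0 with x <> 0, then
   nonsingularity yields an index j for which c = sum_i (a_ij + a_ji) x_i is nonzero, and
   Q(t x + e_j) = t^2 Q(x) + t c + a_jj = t c + a_jj takes every value as t ranges over Q_p.
   Since Q is homogeneous of degree 2, multiplying vectors representing q and 1 by a common
   power p^M moves them into Z_p^n: p^(2M) q = Q(a) and p^(2M) = Q(b) with a, b in Z_p^n, so
   q = Q(a) / Q(b). Truncating a and b to integer vectors changes Q(a) and Q(b) only by
   p-adically small amounts, which gives the density of R(Q(Z^n)).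

   Elements of Q_p are handled through Cauchy representatives: an equation in Q_p is a null
   difference, and a nonzero element is a sequence bounded away from 0 (pbounded_below). *)

lemma rat_as_int_fraction:
  fixes r :: rat
  obtains x y :: int where "r = of_int x / of_int y" "y > 0"
proof -
  obtain x y where q: "quotient_of r = (x, y)" by (cases "quotient_of r")
  show ?thesis using that quotient_of_div[OF q] quotient_of_denom_pos[OF q] by blast
qed

lemma qform_scale: "qform A (\<lambda>i k. c * x i k) = (\<lambda>k. c\<^sup>2 * qform A x k)"
  unfolding qform_def by (simp add: sum_distrib_left power2_eq_square algebra_simps)

lemma qform_diff_eq:
  "qform A x k - qform A y k =
    (\<Sum>i\<in>UNIV. \<Sum>j\<in>UNIV. A i j k * (x i k * (x j k - y j k) + (x i k - y i k) * y j k))"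
  unfolding qform_def by (simp add: sum_subtractf[symmetric] algebra_simps)

lemma qform_add_unit_vector:
  "qform A (\<lambda>i k. t k * x i k + (if i = j then 1 else 0)) k =
    (t k)\<^sup>2 * qform A x k + t k * (\<Sum>i\<in>UNIV. (A i j k + A j i k) * x i k) + A j j k"
proof -
  have "qform A (\<lambda>i k. t k * x i k + (if i = j then 1 else 0)) k =
      (t k)\<^sup>2 * (\<Sum>i\<in>UNIV. \<Sum>l\<in>UNIV. A i l k * x i k * x l k)
      + t k * (\<Sum>i\<in>UNIV. \<Sum>l\<in>UNIV. if l = j then A i l k * x i k else 0)
      + t k * (\<Sum>i\<in>UNIV. \<Sum>l\<in>UNIV. if i = j then A i l k * x l k else 0)
      + (\<Sum>i\<in>UNIV. \<Sum>l\<in>UNIV. if i = j then (if l = j then A i l k else 0) else 0)"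
    unfolding qform_def sum_distrib_left sum.distrib[symmetric]
    by (intro sum.cong refl) (auto simp: algebra_simps power2_eq_square)
  also have "\<dots> = (t k)\<^sup>2 * qform A x k + t k * (\<Sum>i\<in>UNIV. (A i j k + A j i k) * x i k) + A j j k"
  proof -
    have if_sum: "(\<Sum>l\<in>UNIV. if P then f l else 0) = (if P then \<Sum>l\<in>UNIV. f l else 0)"
      for P and f :: "'a \<Rightarrow> rat" by simp
    show ?thesis
      unfolding qform_def
      by (simp add: if_sum sum_distrib_left[symmetric] sum.distrib algebra_simps)
  qed
  finally show ?thesis .
qed

lemma det_replace_column_mult_vector:
  fixes A :: "'n::finite \<Rightarrow> 'n \<Rightarrow> 'a::field"
  shows "det (\<chi> i j. if j = j0 then \<Sum>l\<in>UNIV. A i l * x l else A i j) = x j0 * det (\<chi> i j. A i j)"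
proof -
  have "(\<chi> i j. A i j) *v (\<chi> j. x j) = (\<chi> i. \<Sum>l\<in>UNIV. A i l * x l)"
    by (simp add: matrix_vector_mult_def)
  from cramer_lemma[where A = "\<chi> i j. A i j" and k = j0 and x = "\<chi> j. x j", unfolded this]
  show ?thesis unfolding vec_lambda_beta .
qed

locale padic =
  fixes p :: nat
  assumes prime: "prime p"
begin

section \<open>The p-adic absolute value on the rationals\<close>

lemma prime_elem_p: "prime_elem (int p)"
  using prime by simp

lemma real_p_gt_1: "real p > 1"
  using prime_gt_1_nat[OF prime] by simp

lemma inverse_p_less_1: "inverse (real p) < 1"
  using real_p_gt_1 by (simp add: inverse_less_1_iff)

lemma multiplicity_add_ge:
  assumes "x + y \<noteq> 0"
  shows "min (multiplicity (int p) x) (multiplicity (int p) y) \<le> multiplicity (int p) (x + y)"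
proof -
  let ?n = "min (multiplicity (int p) x) (multiplicity (int p) y)"
  have "int p ^ ?n dvd x" "int p ^ ?n dvd y"
    by (simp_all add: multiplicity_dvd')
  then have "int p ^ ?n dvd x + y" by simp
  then show ?thesis
    using multiplicity_geI[OF assms prime_elem_not_unit[OF prime_elem_p]] by blast
qed

lemma padic_val_of_int_divide:
  assumes x: "x \<noteq> 0" and y: "y \<noteq> 0"
  shows "padic_val p (of_int x / of_int y) =
     int (multiplicity (int p) x) - int (multiplicity (int p) y)"
proof -
  obtain a b where q: "quotient_of (of_int x / of_int y) = (a, b)"
    by (cases "quotient_of (of_int x / of_int y)")
  have eq: "(of_int x / of_int y :: rat) = of_int a / of_int b" using quotient_of_div[OF q] .
  have b: "b > 0" using quotient_of_denom_pos[OF q] .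
  have a: "a \<noteq> 0" using eq x y b by auto
  have "(of_int (x * b) :: rat) = of_int (a * y)"
    using eq y b by (simp add: field_simps)
  then have "multiplicity (int p) (x * b) = multiplicity (int p) (a * y)"
    by (simp only: of_int_eq_iff)
  then have "multiplicity (int p) x + multiplicity (int p) b =
      multiplicity (int p) a + multiplicity (int p) y"
    using prime_elem_multiplicity_mult_distrib[OF prime_elem_p] x y a b by simp
  then show ?thesis unfolding padic_val_def q by simp
qed

lemma padic_val_mult:
  assumes "r \<noteq> 0" "s \<noteq> 0"
  shows "padic_val p (r * s) = padic_val p r + padic_val p s"
proof -
  obtain x y where r: "r = of_int x / of_int y" "y > 0" by (rule rat_as_int_fraction)
  obtain u w where s: "s = of_int u / of_int w" "w > 0" by (rule rat_as_int_fraction)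
  have "x \<noteq> 0" "u \<noteq> 0" using assms r s by auto
  moreover have "r * s = of_int (x * u) / of_int (y * w)" using r s by simp
  ultimately show ?thesis
    using r s padic_val_of_int_divide[of "x * u" "y * w"]
    by (simp add: padic_val_of_int_divide prime_elem_multiplicity_mult_distrib[OF prime_elem_p])
qed

lemma padic_val_add:
  assumes "r \<noteq> 0" "s \<noteq> 0" "r + s \<noteq> 0"
  shows "min (padic_val p r) (padic_val p s) \<le> padic_val p (r + s)"
proof -
  obtain x y where r: "r = of_int x / of_int y" "y > 0" by (rule rat_as_int_fraction)
  obtain u w where s: "s = of_int u / of_int w" "w > 0" by (rule rat_as_int_fraction)
  let ?m = "multiplicity (int p)"
  have x: "x \<noteq> 0" and u: "u \<noteq> 0" using assms r s by auto
  have rs: "r + s = of_int (x * w + u * y) / of_int (y * w)" using r s by (simp add: field_simps)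
  have z: "x * w + u * y \<noteq> 0" using assms(3) unfolding rs by (metis div_0 of_int_0)
  have m: "?m (x * w) = ?m x + ?m w" "?m (u * y) = ?m u + ?m y" "?m (y * w) = ?m y + ?m w"
    using prime_elem_multiplicity_mult_distrib[OF prime_elem_p] x u r s by auto
  have "min (?m (x * w)) (?m (u * y)) \<le> ?m (x * w + u * y)"
    by (rule multiplicity_add_ge[OF z])
  then show ?thesis
    using r s x u z m padic_val_of_int_divide[OF z, of "y * w"] unfolding rs
    by (simp add: padic_val_of_int_divide)
qed

lemma padic_norm_nonzero: "r \<noteq> 0 \<Longrightarrow> padic_norm p r = real p powr (- padic_val p r)"
  unfolding padic_norm_def by simp

lemma padic_norm_nonneg: "padic_norm p r \<ge> 0"
  unfolding padic_norm_def by simp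

lemma padic_norm_0 [simp]: "padic_norm p 0 = 0"
  unfolding padic_norm_def by simp

lemma padic_norm_pos: "r \<noteq> 0 \<Longrightarrow> padic_norm p r > 0"
  unfolding padic_norm_def using real_p_gt_1 by simp

lemma padic_norm_mult: "padic_norm p (r * s) = padic_norm p r * padic_norm p s"
  by (cases "r = 0 \<or> s = 0")
    (auto simp: padic_norm_nonzero padic_val_mult powr_add[symmetric])

lemma padic_norm_add_le_max: "padic_norm p (r + s) \<le> max (padic_norm p r) (padic_norm p s)"
proof (cases "r = 0 \<or> s = 0 \<or> r + s = 0")
  case True
  then show ?thesis by (auto simp: padic_norm_nonneg le_max_iff_disj)
next
  case False
  then have "min (padic_val p r) (padic_val p s) \<le> padic_val p (r + s)"
    by (intro padic_val_add) auto
  then have "real p powr (- padic_val p (r + s)) \<le>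
      max (real p powr (- padic_val p r)) (real p powr (- padic_val p s))"
    using real_p_gt_1 by (auto simp: min_def max_def split: if_splits)
  then show ?thesis using False by (simp add: padic_norm_nonzero)
qed

lemma padic_norm_1 [simp]: "padic_norm p 1 = 1"
  using padic_val_of_int_divide[of 1 1] real_p_gt_1 by (simp add: padic_norm_nonzero)

lemma padic_norm_minus [simp]: "padic_norm p (- r) = padic_norm p r"
proof -
  have "padic_val p (- r) = padic_val p r"
    unfolding padic_val_def by (simp add: rat_uminus_code Let_def split: prod.splits)
  then show ?thesis unfolding padic_norm_def by simp
qed

lemma padic_norm_diff_commute: "padic_norm p (r - s) = padic_norm p (s - r)"
  using padic_norm_minus[of "r - s"] by simp

lemma padic_norm_diff_le_max: "padic_norm p (r - s) \<le> max (padic_norm p r) (padic_norm p s)"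
  using padic_norm_add_le_max[of r "- s"] by simp

lemma padic_norm_add_le: "padic_norm p (r + s) \<le> padic_norm p r + padic_norm p s"
  using padic_norm_add_le_max[of r s] padic_norm_nonneg[of r] padic_norm_nonneg[of s] by linarith

lemma padic_norm_abs_diff_le: "\<bar>padic_norm p r - padic_norm p s\<bar> \<le> padic_norm p (r - s)"
  using padic_norm_add_le[of s "r - s"] padic_norm_add_le[of r "s - r"]
  by (simp add: padic_norm_diff_commute[of s r])

lemma padic_norm_diff_less_trans:
  "padic_norm p (r - s) < e \<Longrightarrow> padic_norm p (s - t) < e \<Longrightarrow> padic_norm p (r - t) < e"
  using padic_norm_add_le_max[of "r - s" "s - t"] by simp

lemma padic_norm_eq_if_close:
  assumes "padic_norm p (r - s) < padic_norm p r"
  shows "padic_norm p s = padic_norm p r"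
  using padic_norm_add_le_max[of s "r - s"] padic_norm_add_le_max[of r "s - r"] assms
  by (simp add: padic_norm_diff_commute[of s r])

lemma padic_norm_sum_le:
  assumes "\<And>x. x \<in> S \<Longrightarrow> padic_norm p (f x) \<le> c" and "0 \<le> c"
  shows "padic_norm p (sum f S) \<le> c"
  using assms(1)
proof (induction S rule: infinite_finite_induct)
  case (insert x F)
  then have "padic_norm p (f x) \<le> c" "padic_norm p (sum f F) \<le> c" by auto
  then show ?case using insert(1,2) padic_norm_add_le_max[of "f x" "sum f F"] by simp
qed (use assms(2) in auto)

lemma padic_norm_prod: "padic_norm p (prod f S) = (\<Prod>x\<in>S. padic_norm p (f x))"
  by (induction S rule: infinite_finite_induct) (simp_all add: padic_norm_mult)

lemma padic_norm_power: "padic_norm p (r ^ n) = padic_norm p r ^ n"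
  by (induction n) (simp_all add: padic_norm_mult)

lemma padic_norm_inverse: "padic_norm p (inverse r) = inverse (padic_norm p r)"
proof (cases "r = 0")
  case False
  then have "padic_norm p (inverse r) * padic_norm p r = 1"
    using padic_norm_mult[of "inverse r" r] by simp
  then show ?thesis by (metis inverse_unique mult.commute)
qed simp

lemma padic_norm_divide: "padic_norm p (r / s) = padic_norm p r / padic_norm p s"
  by (simp add: divide_inverse padic_norm_mult padic_norm_inverse)

lemma padic_norm_of_int:
  "x \<noteq> 0 \<Longrightarrow> padic_norm p (of_int x) = real p powr (- real (multiplicity (int p) x))"
  using padic_val_of_int_divide[of x 1] by (simp add: padic_norm_nonzero)

lemma padic_norm_of_int_le_1: "padic_norm p (of_int x) \<le> 1"
  using real_p_gt_1 powr_mono[of "- real (multiplicity (int p) x)" 0 "real p"]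
  by (cases "x = 0") (simp_all add: padic_norm_of_int)

lemma padic_norm_Ints_le_1: "r \<in> \<int> \<Longrightarrow> padic_norm p r \<le> 1"
  using padic_norm_of_int_le_1 by (auto elim: Ints_cases)

lemma padic_norm_of_int_eq_1: "\<not> int p dvd x \<Longrightarrow> padic_norm p (of_int x) = 1"
  using not_dvd_imp_multiplicity_0[of "int p" x] prime_gt_0_nat[OF prime]
  by (cases "x = 0") (simp_all add: padic_norm_of_int)

lemma padic_norm_p: "padic_norm p (of_nat p) = inverse (real p)"
proof -
  have "multiplicity (int p) (int p) = 1"
    using multiplicity_self[of "int p"] prime_elem_not_unit[OF prime_elem_p]
      prime_gt_0_nat[OF prime]
    by simp
  then show ?thesis
    using padic_norm_of_int[of "int p"] prime_gt_0_nat[OF prime] by (simp add: powr_minus)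
qed

lemma padic_norm_le_1_imp_not_dvd_denominator:
  assumes q: "quotient_of r = (a, b)" and r: "padic_norm p r \<le> 1"
  shows "\<not> int p dvd b"
proof
  assume pb: "int p dvd b"
  have b: "b > 0" using quotient_of_denom_pos[OF q] .
  have "\<not> int p dvd a"
    using pb quotient_of_coprime[OF q] prime_elem_not_unit[OF prime_elem_p] coprime_common_divisor
    by blast
  then have a: "a \<noteq> 0" and ma: "multiplicity (int p) a = 0"
    using not_dvd_imp_multiplicity_0 by auto
  have "multiplicity (int p) b > 0"
    using pb b prime_elem_not_unit[OF prime_elem_p] by (simp add: multiplicity_gt_zero_iff)
  then have "1 < real p powr (real (multiplicity (int p) b))"
    using real_p_gt_1 by simp
  also have "\<dots> = padic_norm p r"
    using quotient_of_div[OF q] a b ma by (simp add: padic_norm_nonzero padic_val_of_int_divide)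
  finally show False using r by simp
qed

lemma padic_integer_approx:
  assumes "padic_norm p r \<le> 1"
  shows "\<exists>n::int. padic_norm p (r - of_int n) \<le> inverse (real p) ^ k"
proof -
  obtain a b where q: "quotient_of r = (a, b)" by (cases "quotient_of r")
  have b: "b > 0" and r: "r = of_int a / of_int b"
    using quotient_of_denom_pos[OF q] quotient_of_div[OF q] by auto
  have "\<not> int p dvd b" by (rule padic_norm_le_1_imp_not_dvd_denominator[OF q assms])
  then have "coprime b (int p ^ k)"
    using prime_elem_imp_coprime[OF prime_elem_p] by (simp add: coprime_commute)
  then obtain u v where uv: "u * b + v * int p ^ k = 1"
    using bezout_int[of b "int p ^ k"] by auto
  have "r - of_int (a * u) = of_int a * of_int v * of_nat p ^ k / of_int b"
  proof -
    have "(1 :: rat) - of_int u * of_int b = of_int v * of_nat p ^ k"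
      using arg_cong[OF uv, of "of_int :: int \<Rightarrow> rat"] by (simp add: algebra_simps)
    moreover have "r - of_int (a * u) = of_int a * (1 - of_int u * of_int b) / of_int b"
      using b unfolding r by (simp add: field_simps)
    ultimately show ?thesis by (simp add: mult.assoc)
  qed
  then have "padic_norm p (r - of_int (a * u)) =
      padic_norm p (of_int a) * padic_norm p (of_int v) * inverse (real p) ^ k"
    using padic_norm_of_int_eq_1[OF \<open>\<not> int p dvd b\<close>]
    by (simp add: padic_norm_mult padic_norm_divide padic_norm_power padic_norm_p)
  also have "\<dots> \<le> inverse (real p) ^ k"
    using padic_norm_of_int_le_1[of a] padic_norm_of_int_le_1[of v] padic_norm_nonneg
    by (simp add: mult_le_one mult_left_le_one_le)
  finally show ?thesis by blast
qed

end

abbreviation pbounded :: "nat \<Rightarrow> (nat \<Rightarrow> rat) \<Rightarrow> bool" where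
  "pbounded p X \<equiv> Bseq (\<lambda>k. padic_norm p (X k))"

definition pbounded_below :: "nat \<Rightarrow> (nat \<Rightarrow> rat) \<Rightarrow> bool" where
  "pbounded_below p X \<longleftrightarrow> (\<exists>d>0. eventually (\<lambda>k. d \<le> padic_norm p (X k)) sequentially)"

context padic
begin

section \<open>Null, bounded and Cauchy sequences\<close>

lemma pnull_iff_Zfun: "pnull p X \<longleftrightarrow> Zfun (\<lambda>k. padic_norm p (X k)) sequentially"
  unfolding pnull_def Zfun_def eventually_sequentially by (simp add: padic_norm_nonneg)

lemma pnull_eventually_less:
  "pnull p X \<Longrightarrow> e > 0 \<Longrightarrow> eventually (\<lambda>k. padic_norm p (X k) < e) sequentially"
  unfolding pnull_def eventually_sequentially by blast

lemma pnull_ssubst: "eventually (\<lambda>k. X k = Y k) sequentially \<Longrightarrow> pnull p Y \<Longrightarrow> pnull p X"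
  unfolding pnull_iff_Zfun by (rule Zfun_ssubst) (auto elim: eventually_mono)

lemma pnull_zero: "pnull p (\<lambda>k. 0)"
  unfolding pnull_def by simp

lemma pnull_minus: "pnull p X \<Longrightarrow> pnull p (\<lambda>k. - X k)"
  unfolding pnull_def by simp

lemma pnull_add:
  assumes "pnull p X" "pnull p Y"
  shows "pnull p (\<lambda>k. X k + Y k)"
proof -
  have "Zfun (\<lambda>k. padic_norm p (X k) + padic_norm p (Y k)) sequentially"
    using assms unfolding pnull_iff_Zfun by (rule Zfun_add)
  then show ?thesis
    unfolding pnull_iff_Zfun
    by (rule Zfun_imp_Zfun[where K = 1]) (simp add: padic_norm_add_le padic_norm_nonneg)
qed

lemma pnull_diff: "pnull p X \<Longrightarrow> pnull p Y \<Longrightarrow> pnull p (\<lambda>k. X k - Y k)"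
  using pnull_add[of X "\<lambda>k. - Y k"] pnull_minus[of Y] by simp

lemma pnull_sum: "(\<And>i. i \<in> S \<Longrightarrow> pnull p (X i)) \<Longrightarrow> pnull p (\<lambda>k. \<Sum>i\<in>S. X i k)"
  by (induction S rule: infinite_finite_induct) (auto simp: pnull_zero intro: pnull_add)

lemma pbounded_mult_pnull: "pbounded p X \<Longrightarrow> pnull p Y \<Longrightarrow> pnull p (\<lambda>k. X k * Y k)"
  unfolding pnull_iff_Zfun padic_norm_mult
  by (rule bounded_bilinear.Bfun_prod_Zfun[OF bounded_bilinear_mult])

lemma pnull_mult_pbounded: "pnull p X \<Longrightarrow> pbounded p Y \<Longrightarrow> pnull p (\<lambda>k. X k * Y k)"
  using pbounded_mult_pnull[of Y X] by (simp add: mult.commute)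

lemma pnull_cmult: "pnull p X \<Longrightarrow> pnull p (\<lambda>k. c * X k)"
  by (rule pbounded_mult_pnull) simp_all

lemma pnull_reindex:
  "pnull p X \<Longrightarrow> filterlim r sequentially sequentially \<Longrightarrow> pnull p (\<lambda>k. X (r k))"
  unfolding pnull_iff_Zfun Zfun_def by (auto intro: eventually_compose_filterlim)

lemma pbounded_mult: "pbounded p X \<Longrightarrow> pbounded p Y \<Longrightarrow> pbounded p (\<lambda>k. X k * Y k)"
  by (simp add: padic_norm_mult Bseq_mult)

lemma pbounded_reindex: "pbounded p X \<Longrightarrow> pbounded p (\<lambda>k. X (r k))"
  by (rule Bseq_subseq)

lemma pbounded_uniform:
  fixes X :: "'i::finite \<Rightarrow> nat \<Rightarrow> rat"
  assumes "\<And>i. pbounded p (X i)"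
  shows "\<exists>B>0. \<forall>i k. padic_norm p (X i k) \<le> B"
proof -
  have "\<forall>i. \<exists>K>0. \<forall>k. padic_norm p (X i k) \<le> K"
    using assms unfolding Bseq_def by (simp add: padic_norm_nonneg)
  then obtain K where K: "\<And>i. K i > 0" "\<And>i k. padic_norm p (X i k) \<le> K i"
    by metis
  have "K i \<le> (\<Sum>i\<in>UNIV. K i)" for i
    using K(1) by (intro member_le_sum) (auto intro: less_imp_le)
  then have "\<forall>i k. padic_norm p (X i k) \<le> (\<Sum>i\<in>UNIV. K i)"
    using K(2) order_trans by blast
  moreover have "(\<Sum>i\<in>UNIV. K i) > 0" using K(1) by (intro sum_pos) auto
  ultimately show ?thesis by blast
qed

lemma pbounded_below_imp_not_pnull: "pbounded_below p X \<Longrightarrow> \<not> pnull p X"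
proof
  assume "pbounded_below p X" "pnull p X"
  then obtain d where "eventually (\<lambda>k. d \<le> padic_norm p (X k)) sequentially"
    "eventually (\<lambda>k. padic_norm p (X k) < d) sequentially"
    unfolding pbounded_below_def using pnull_eventually_less by blast
  then have "eventually (\<lambda>k. False) sequentially" by eventually_elim auto
  then show False by simp
qed

lemma pbounded_below_const: "c \<noteq> 0 \<Longrightarrow> pbounded_below p (\<lambda>k. c)"
  unfolding pbounded_below_def using padic_norm_pos by auto

lemma pbounded_below_eventually_nonzero:
  "pbounded_below p X \<Longrightarrow> eventually (\<lambda>k. X k \<noteq> 0) sequentially"
  unfolding pbounded_below_def by (auto elim: eventually_mono)

lemma pbounded_inverse: "pbounded_below p X \<Longrightarrow> pbounded p (\<lambda>k. inverse (X k))"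
proof -
  assume "pbounded_below p X"
  then obtain d where "d > 0" "eventually (\<lambda>k. d \<le> padic_norm p (X k)) sequentially"
    unfolding pbounded_below_def by blast
  then have "eventually (\<lambda>k. norm (padic_norm p (inverse (X k))) \<le> inverse d) sequentially"
    by (auto elim!: eventually_mono simp: padic_norm_inverse padic_norm_nonneg le_imp_inverse_le)
  then show ?thesis by (rule BfunI)
qed

lemma pbounded_below_perturb:
  assumes "pbounded_below p X" "pnull p (\<lambda>k. X k - Y k)"
  shows "pbounded_below p Y"
proof -
  obtain d where d: "d > 0" "eventually (\<lambda>k. d \<le> padic_norm p (X k)) sequentially"
    using assms(1) unfolding pbounded_below_def by blast
  have "eventually (\<lambda>k. padic_norm p (X k - Y k) < d) sequentially"
    using pnull_eventually_less[OF assms(2) d(1)] .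
  with d(2) have "eventually (\<lambda>k. d \<le> padic_norm p (Y k)) sequentially"
  proof eventually_elim
    case (elim k)
    then have "padic_norm p (X k - Y k) < padic_norm p (X k)" by linarith
    from padic_norm_eq_if_close[OF this] show ?case using elim by simp
  qed
  then show ?thesis using d(1) unfolding pbounded_below_def by blast
qed

lemma pnull_cancel:
  assumes "pbounded_below p X" "pnull p (\<lambda>k. X k * Y k)"
  shows "pnull p Y"
proof (rule pnull_ssubst)
  show "pnull p (\<lambda>k. inverse (X k) * (X k * Y k))"
    using pbounded_inverse[OF assms(1)] assms(2) by (rule pbounded_mult_pnull)
  show "eventually (\<lambda>k. Y k = inverse (X k) * (X k * Y k)) sequentially"
    using pbounded_below_eventually_nonzero[OF assms(1)] by (auto elim: eventually_mono)
qed

(* Reduces the closure properties of Cauchy sequences to those of null sequences. *)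
lemma pcauchy_iff_pnull_reindex:
  "pcauchy p X \<longleftrightarrow> (\<forall>r s. filterlim r sequentially sequentially \<longrightarrow>
      filterlim s sequentially sequentially \<longrightarrow> pnull p (\<lambda>k. X (r k) - X (s k)))"
proof (intro iffI allI impI)
  fix r s :: "nat \<Rightarrow> nat"
  assume X: "pcauchy p X" and r: "filterlim r sequentially sequentially"
    and s: "filterlim s sequentially sequentially"
  show "pnull p (\<lambda>k. X (r k) - X (s k))"
    unfolding pnull_iff_Zfun
  proof (rule ZfunI)
    fix e :: real assume "e > 0"
    then obtain N where N: "\<And>m k. m \<ge> N \<Longrightarrow> k \<ge> N \<Longrightarrow> padic_norm p (X m - X k) < e"
      using X unfolding pcauchy_def by blast
    have "eventually (\<lambda>k. N \<le> r k) sequentially" "eventually (\<lambda>k. N \<le> s k) sequentially"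
      using r s by (simp_all add: filterlim_at_top)
    then show "eventually (\<lambda>k. norm (padic_norm p (X (r k) - X (s k))) < e) sequentially"
      by eventually_elim (simp add: N padic_norm_nonneg)
  qed
next
  assume H: "\<forall>r s. filterlim r sequentially sequentially \<longrightarrow>
      filterlim s sequentially sequentially \<longrightarrow> pnull p (\<lambda>k. X (r k) - X (s k))"
  show "pcauchy p X"
  proof (rule ccontr)
    assume "\<not> pcauchy p X"
    then obtain e where e: "e > 0" "\<forall>N. \<exists>m\<ge>N. \<exists>k\<ge>N. e \<le> padic_norm p (X m - X k)"
      unfolding pcauchy_def by (auto simp: not_less)
    have "\<exists>mk. N \<le> fst mk \<and> N \<le> snd mk \<and> e \<le> padic_norm p (X (fst mk) - X (snd mk))" for N
      using e(2) by (metis fst_conv snd_conv)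
    then obtain f where f: "\<And>N. N \<le> fst (f N)" "\<And>N. N \<le> snd (f N)"
      "\<And>N. e \<le> padic_norm p (X (fst (f N)) - X (snd (f N)))"
      by metis
    have "filterlim (\<lambda>N. fst (f N)) sequentially sequentially"
      "filterlim (\<lambda>N. snd (f N)) sequentially sequentially"
      using f(1,2) by (auto intro: filterlim_at_top_mono[OF filterlim_ident])
    then have "pnull p (\<lambda>N. X (fst (f N)) - X (snd (f N)))" by (rule H[rule_format])
    from pnull_eventually_less[OF this e(1)]
    have "eventually (\<lambda>N. padic_norm p (X (fst (f N)) - X (snd (f N))) < e) sequentially" .
    then have "eventually (\<lambda>N. False) sequentially"
      by (rule eventually_mono) (use f(3) not_less in blast)
    then show False by simp
  qed
qed

lemma pcauchyI_reindex:
  assumes "\<And>r s. filterlim r sequentially sequentially \<Longrightarrow> filterlim s sequentially sequentially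
      \<Longrightarrow> pnull p (\<lambda>k. X (r k) - X (s k))"
  shows "pcauchy p X"
  using assms unfolding pcauchy_iff_pnull_reindex by blast

lemma pcauchyD_reindex:
  "pcauchy p X \<Longrightarrow> filterlim r sequentially sequentially \<Longrightarrow> filterlim s sequentially sequentially
      \<Longrightarrow> pnull p (\<lambda>k. X (r k) - X (s k))"
  unfolding pcauchy_iff_pnull_reindex by blast

lemma pcauchy_const: "pcauchy p (\<lambda>k. c)"
  unfolding pcauchy_def by simp

lemma pcauchy_imp_pbounded:
  assumes "pcauchy p X"
  shows "pbounded p X"
proof -
  obtain N where N: "\<And>k. k \<ge> N \<Longrightarrow> padic_norm p (X k - X N) < 1"
    using assms unfolding pcauchy_def by (meson order_refl zero_less_one)
  have "eventually (\<lambda>k. norm (padic_norm p (X k)) \<le> max (padic_norm p (X N)) 1) sequentially"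
    unfolding eventually_sequentially
  proof (intro exI allI impI)
    fix k assume "k \<ge> N"
    then show "norm (padic_norm p (X k)) \<le> max (padic_norm p (X N)) 1"
      using N[of k] padic_norm_add_le_max[of "X N" "X k - X N"] by (simp add: padic_norm_nonneg)
  qed
  then show ?thesis by (rule BfunI)
qed

lemma pcauchy_pbounded_below:
  assumes X: "pcauchy p X" and "\<not> pnull p X"
  shows "pbounded_below p X"
proof -
  obtain e where e: "e > 0" "\<And>N. \<exists>k\<ge>N. e \<le> padic_norm p (X k)"
    using assms(2) unfolding pnull_def by (auto simp: not_less)
  obtain N where N: "\<And>m k. m \<ge> N \<Longrightarrow> k \<ge> N \<Longrightarrow> padic_norm p (X m - X k) < e"
    using X e(1) unfolding pcauchy_def by blast
  obtain k0 where k0: "k0 \<ge> N" "e \<le> padic_norm p (X k0)" using e(2) by blast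
  have "e \<le> padic_norm p (X m)" if "m \<ge> N" for m
  proof -
    have "padic_norm p (X k0 - X m) < padic_norm p (X k0)" using N[OF k0(1) that] k0(2) by simp
    from padic_norm_eq_if_close[OF this] show ?thesis using k0(2) by simp
  qed
  then show ?thesis unfolding pbounded_below_def eventually_sequentially using e(1) by blast
qed

lemma pcauchy_add:
  assumes "pcauchy p X" "pcauchy p Y"
  shows "pcauchy p (\<lambda>k. X k + Y k)"
proof (rule pcauchyI_reindex)
  fix r s :: "nat \<Rightarrow> nat"
  assume "filterlim r sequentially sequentially" "filterlim s sequentially sequentially"
  then have "pnull p (\<lambda>k. (X (r k) - X (s k)) + (Y (r k) - Y (s k)))"
    using assms by (intro pnull_add pcauchyD_reindex)
  then show "pnull p (\<lambda>k. X (r k) + Y (r k) - (X (s k) + Y (s k)))"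
    by (simp add: add_diff_add)
qed

lemma pcauchy_minus: "pcauchy p X \<Longrightarrow> pcauchy p (\<lambda>k. - X k)"
  unfolding pcauchy_def by (simp add: padic_norm_diff_commute)

lemma pcauchy_diff: "pcauchy p X \<Longrightarrow> pcauchy p Y \<Longrightarrow> pcauchy p (\<lambda>k. X k - Y k)"
  using pcauchy_add[of X "\<lambda>k. - Y k"] pcauchy_minus[of Y] by simp

lemma pcauchy_sum: "(\<And>i. i \<in> S \<Longrightarrow> pcauchy p (X i)) \<Longrightarrow> pcauchy p (\<lambda>k. \<Sum>i\<in>S. X i k)"
  by (induction S rule: infinite_finite_induct) (auto simp: pcauchy_const intro: pcauchy_add)

lemma pcauchy_mult:
  assumes X: "pcauchy p X" and Y: "pcauchy p Y"
  shows "pcauchy p (\<lambda>k. X k * Y k)"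
proof (rule pcauchyI_reindex)
  fix r s :: "nat \<Rightarrow> nat"
  assume rs: "filterlim r sequentially sequentially" "filterlim s sequentially sequentially"
  have "pbounded p (\<lambda>k. X (r k))" "pbounded p (\<lambda>k. Y (s k))"
    using pcauchy_imp_pbounded[OF X] pcauchy_imp_pbounded[OF Y]
    by (simp_all add: pbounded_reindex)
  then have "pnull p (\<lambda>k. X (r k) * (Y (r k) - Y (s k)) + (X (r k) - X (s k)) * Y (s k))"
    using pcauchyD_reindex[OF X rs] pcauchyD_reindex[OF Y rs]
    by (intro pnull_add pbounded_mult_pnull pnull_mult_pbounded)
  then show "pnull p (\<lambda>k. X (r k) * Y (r k) - X (s k) * Y (s k))"
    by (simp add: algebra_simps)
qed

lemma pcauchy_inverse:
  assumes X: "pcauchy p X" and "pbounded_below p X"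
  shows "pcauchy p (\<lambda>k. inverse (X k))"
proof (rule pcauchyI_reindex)
  fix r s :: "nat \<Rightarrow> nat"
  assume rs: "filterlim r sequentially sequentially" "filterlim s sequentially sequentially"
  have "pbounded p (\<lambda>k. inverse (X (r k)) * inverse (X (s k)))"
    using pbounded_reindex[OF pbounded_inverse[OF assms(2)]] by (intro pbounded_mult)
  then have "pnull p (\<lambda>k. inverse (X (r k)) * inverse (X (s k)) * (X (s k) - X (r k)))"
    using pcauchyD_reindex[OF X rs(2,1)] by (rule pbounded_mult_pnull)
  moreover have "eventually (\<lambda>k. X (r k) \<noteq> 0) sequentially"
    "eventually (\<lambda>k. X (s k) \<noteq> 0) sequentially"
    using pbounded_below_eventually_nonzero[OF assms(2)] rs
    by (auto intro: eventually_compose_filterlim)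
  then have "eventually (\<lambda>k. inverse (X (r k)) - inverse (X (s k)) =
      inverse (X (r k)) * inverse (X (s k)) * (X (s k) - X (r k))) sequentially"
    by eventually_elim (simp add: field_simps)
  ultimately show "pnull p (\<lambda>k. inverse (X (r k)) - inverse (X (s k)))"
    by (rule pnull_ssubst[rotated])
qed

lemma pcauchy_perturb:
  assumes X: "pcauchy p X" and "pnull p (\<lambda>k. X k - Y k)"
  shows "pcauchy p Y"
proof (rule pcauchyI_reindex)
  fix r s :: "nat \<Rightarrow> nat"
  assume rs: "filterlim r sequentially sequentially" "filterlim s sequentially sequentially"
  have "pnull p (\<lambda>k. (X (r k) - X (s k)) - (X (r k) - Y (r k)) + (X (s k) - Y (s k)))"
    using pnull_add[OF pnull_diff[OF pcauchyD_reindex[OF X rs] pnull_reindex[OF assms(2) rs(1)]]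
        pnull_reindex[OF assms(2) rs(2)]] .
  then show "pnull p (\<lambda>k. Y (r k) - Y (s k))" by simp
qed

lemma pcauchy_uniform:
  fixes X :: "'i::finite \<Rightarrow> nat \<Rightarrow> rat"
  assumes "\<And>i. pcauchy p (X i)" and "e > 0"
  obtains N where "\<And>i m k. m \<ge> N \<Longrightarrow> k \<ge> N \<Longrightarrow> padic_norm p (X i m - X i k) < e"
proof -
  have "eventually (\<lambda>mk. \<forall>i. padic_norm p (X i (snd mk) - X i (fst mk)) < e)
      (sequentially \<times>\<^sub>F sequentially)"
    using assms
    by (intro eventually_all_finite) (simp add: pcauchy_def eventually_prod_sequentially)
  then show ?thesis using that unfolding eventually_prod_sequentially by simp blast
qed

lemma Qp_norm_le:
  assumes X: "pcauchy p X" and "eventually (\<lambda>k. padic_norm p (X k) \<le> c) sequentially"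
  shows "Qp_norm p X \<le> c"
proof -
  have "Cauchy (\<lambda>k. padic_norm p (X k))"
  proof (rule metric_CauchyI)
    fix e :: real assume "e > 0"
    then obtain N where "\<forall>m\<ge>N. \<forall>k\<ge>N. padic_norm p (X m - X k) < e"
      using X unfolding pcauchy_def by blast
    then show "\<exists>N. \<forall>m\<ge>N. \<forall>k\<ge>N. dist (padic_norm p (X m)) (padic_norm p (X k)) < e"
      unfolding dist_real_def by (meson padic_norm_abs_diff_le le_less_trans)
  qed
  then have "(\<lambda>k. padic_norm p (X k)) \<longlonglongrightarrow> Qp_norm p X"
    unfolding Qp_norm_def by (simp add: Cauchy_convergent_iff convergent_LIMSEQ_iff)
  then show ?thesis using assms(2) by (rule tendsto_upperbound) simp
qed

lemma Zp_truncation: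
  fixes a :: "'i::finite \<Rightarrow> nat \<Rightarrow> rat"
  assumes "\<And>i. a i \<in> Zp p" and "\<eta> > 0"
  obtains a0 :: "'i \<Rightarrow> int"
  where "eventually (\<lambda>k. \<forall>i. padic_norm p (a i k - of_int (a0 i)) < \<eta>) sequentially"
proof -
  have C: "pcauchy p (a i)" and I: "a i k \<in> \<int>" for i k
    using assms(1)[of i] unfolding Zp_def by auto
  obtain N where N: "\<And>i m k. m \<ge> N \<Longrightarrow> k \<ge> N \<Longrightarrow> padic_norm p (a i m - a i k) < \<eta>"
    using pcauchy_uniform[of a, OF C assms(2)] by blast
  have "padic_norm p (a i k - of_int \<lfloor>a i N\<rfloor>) < \<eta>" if "k \<ge> N" for i k
  proof -
    have eq: "of_int \<lfloor>a i N\<rfloor> = a i N"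
      using I[of i N] by (auto elim: Ints_cases)
    show ?thesis unfolding eq using N[OF that order_refl] by simp
  qed
  then have "eventually (\<lambda>k. \<forall>i. padic_norm p (a i k - of_int \<lfloor>a i N\<rfloor>) < \<eta>) sequentially"
    unfolding eventually_sequentially by blast
  then show ?thesis by (rule that)
qed

lemma pcauchy_approx_Zp:
  assumes Y: "pcauchy p Y" and bound: "eventually (\<lambda>k. padic_norm p (Y k) \<le> 1) sequentially"
  shows "\<exists>a\<in>Zp p. pnull p (\<lambda>k. Y k - a k)"
proof -
  \<comment> \<open>Where \<open>padic_norm p (Y k) > 1\<close> the choice is arbitrary; only the tail matters.\<close>
  define a :: "nat \<Rightarrow> rat" where
    "a k = of_int (SOME n. padic_norm p (Y k - of_int n) \<le> inverse (real p) ^ k)" for k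
  from bound
  have close: "eventually (\<lambda>k. padic_norm p (Y k - a k) \<le> inverse (real p) ^ k) sequentially"
  proof eventually_elim
    case (elim k)
    show ?case
      unfolding a_def by (rule someI_ex) (rule padic_integer_approx[OF elim])
  qed
  have "Zfun (\<lambda>k. inverse (real p) ^ k) sequentially"
    using LIMSEQ_power_zero[of "inverse (real p)"] inverse_p_less_1 by (simp add: tendsto_Zfun_iff)
  then have "pnull p (\<lambda>k. Y k - a k)"
    unfolding pnull_iff_Zfun
    by (rule Zfun_imp_Zfun[where K = 1]) (use close in \<open>simp add: padic_norm_nonneg\<close>)
  moreover from this have "a \<in> Zp p"
    using pcauchy_perturb[OF Y] unfolding Zp_def a_def by simp
  ultimately show ?thesis by blast
qed

lemma pcauchy_scale_into_Zp:
  fixes v :: "'i::finite \<Rightarrow> nat \<Rightarrow> rat"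
  assumes v: "\<And>i. pcauchy p (v i)"
  shows "\<exists>M a. (\<forall>i. a i \<in> Zp p) \<and> (\<forall>i. pnull p (\<lambda>k. of_nat p ^ M * v i k - a i k))"
proof -
  obtain B where B: "B > 0" "\<And>i k. padic_norm p (v i k) \<le> B"
    using pbounded_uniform[of v] pcauchy_imp_pbounded[OF v] by blast
  from inverse_p_less_1 obtain M where M: "inverse (real p) ^ M < inverse B"
    using real_arch_pow_inv[of "inverse B"] B(1) by auto
  have "padic_norm p (of_nat p ^ M * v i k) \<le> 1" for i k
  proof -
    have "padic_norm p (of_nat p ^ M * v i k) = inverse (real p) ^ M * padic_norm p (v i k)"
      by (simp add: padic_norm_mult padic_norm_power padic_norm_p)
    also have "\<dots> \<le> inverse B * B"
      using M B by (intro mult_mono) (auto simp: padic_norm_nonneg)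
    finally show ?thesis using B(1) by simp
  qed
  then have "\<forall>i. \<exists>a\<in>Zp p. pnull p (\<lambda>k. of_nat p ^ M * v i k - a k)"
    using v by (intro allI pcauchy_approx_Zp pcauchy_mult pcauchy_const always_eventually) auto
  then show ?thesis by metis
qed

section \<open>Quadratic forms\<close>

lemma padic_norm_qform_diff_le:
  fixes A :: "'n::finite \<Rightarrow> 'n \<Rightarrow> nat \<Rightarrow> rat"
  assumes A: "\<And>i j. padic_norm p (A i j k) \<le> B"
    and x: "\<And>i. padic_norm p (x i k) \<le> C" and y: "\<And>i. padic_norm p (y i k) \<le> C"
    and xy: "\<And>i. padic_norm p (x i k - y i k) \<le> \<eta>"
  shows "padic_norm p (qform A x k - qform A y k) \<le> B * (C * \<eta>)"
proof -
  have nonneg: "0 \<le> B" "0 \<le> C" "0 \<le> \<eta>"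
    using order_trans[OF padic_norm_nonneg A] order_trans[OF padic_norm_nonneg x]
      order_trans[OF padic_norm_nonneg xy] .
  show ?thesis unfolding qform_diff_eq
  proof (intro padic_norm_sum_le)
    fix i j :: 'n
    have "padic_norm p (x i k * (x j k - y j k)) \<le> C * \<eta>"
      unfolding padic_norm_mult using x xy nonneg
      by (intro mult_mono) (auto simp: padic_norm_nonneg)
    moreover have "padic_norm p ((x i k - y i k) * y j k) \<le> C * \<eta>"
      unfolding padic_norm_mult mult.commute[of "padic_norm p (x i k - y i k)"]
      using y xy nonneg by (intro mult_mono) (auto simp: padic_norm_nonneg)
    ultimately have "padic_norm p (x i k * (x j k - y j k) + (x i k - y i k) * y j k) \<le> C * \<eta>"
      by (rule order_trans[OF padic_norm_add_le_max max.boundedI])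
    then show "padic_norm p (A i j k * (x i k * (x j k - y j k) + (x i k - y i k) * y j k))
        \<le> B * (C * \<eta>)"
      unfolding padic_norm_mult using A nonneg by (intro mult_mono) (auto simp: padic_norm_nonneg)
  qed (use nonneg in auto)
qed

lemma pnull_qform_diff:
  fixes A :: "'n::finite \<Rightarrow> 'n \<Rightarrow> nat \<Rightarrow> rat"
  assumes A: "\<And>i j. pbounded p (A i j)"
    and x: "\<And>i. pbounded p (x i)" and y: "\<And>i. pbounded p (y i)"
    and xy: "\<And>i. pnull p (\<lambda>k. x i k - y i k)"
  shows "pnull p (\<lambda>k. qform A x k - qform A y k)"
proof -
  have "pnull p (\<lambda>k. x i k * (x j k - y j k) + (x i k - y i k) * y j k)" for i j
    using x y xy
    by (intro pnull_add pbounded_mult_pnull[of "x i"] pnull_mult_pbounded[where Y = "y j"])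
  then show ?thesis
    unfolding qform_diff_eq using A by (intro pnull_sum pbounded_mult_pnull)
qed

lemma pcauchy_qform:
  "(\<And>i j. pcauchy p (A i j)) \<Longrightarrow> (\<And>i. pcauchy p (x i)) \<Longrightarrow> pcauchy p (qform A x)"
  unfolding qform_def by (intro pcauchy_sum pcauchy_mult) auto

lemma qform_pnull_scale:
  fixes A :: "'n::finite \<Rightarrow> 'n \<Rightarrow> nat \<Rightarrow> rat"
  assumes A: "\<And>i j. pcauchy p (A i j)" and v: "\<And>i. pcauchy p (v i)" and c: "\<And>i. pcauchy p (c i)"
    and cv: "\<And>i. pnull p (\<lambda>k. s * v i k - c i k)" and vT: "pnull p (\<lambda>k. qform A v k - T k)"
  shows "pnull p (\<lambda>k. qform A c k - s\<^sup>2 * T k)"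
proof -
  have "pnull p (\<lambda>k. qform A (\<lambda>i k. s * v i k) k - qform A c k)"
    using A v c cv by (intro pnull_qform_diff pcauchy_imp_pbounded pcauchy_mult pcauchy_const)
  then have "pnull p (\<lambda>k. s\<^sup>2 * (qform A v k - T k) - (qform A (\<lambda>i k. s * v i k) k - qform A c k))"
    by (rule pnull_diff[OF pnull_cmult[OF vT]])
  then show ?thesis by (simp add: qform_scale algebra_simps)
qed

lemma qform_truncation:
  fixes A :: "'n::finite \<Rightarrow> 'n \<Rightarrow> nat \<Rightarrow> rat"
  assumes A: "\<And>i j. pbounded p (A i j)" and a: "\<And>i. a i \<in> Zp p" and "\<delta> > 0"
  obtains a0 :: "'n \<Rightarrow> int" where
    "eventually (\<lambda>k. padic_norm p (qform A a k - qform A (\<lambda>i k. of_int (a0 i)) k) < \<delta>) sequentially"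
proof -
  have "pbounded p (case_prod A ij)" for ij
    using A by (simp add: split_beta)
  then obtain B where B: "B > 0" "\<And>ij k. padic_norm p (case_prod A ij k) \<le> B"
    using pbounded_uniform[of "case_prod A"] by blast
  have B2: "padic_norm p (A i j k) \<le> B" for i j k
    using B(2)[of "(i, j)" k] by simp
  define \<eta> where "\<eta> = \<delta> / (2 * B)"
  have "\<eta> > 0" using B(1) \<open>\<delta> > 0\<close> by (simp add: \<eta>_def)
  with a obtain a0 :: "'n \<Rightarrow> int"
    where a0: "eventually (\<lambda>k. \<forall>i. padic_norm p (a i k - of_int (a0 i)) < \<eta>) sequentially"
    by (rule Zp_truncation)
  have aI: "a i k \<in> \<int>" for i k using a[of i] unfolding Zp_def by auto
  from a0 have "eventually (\<lambda>k. padic_norm p (qform A a k - qform A (\<lambda>i k. of_int (a0 i)) k) < \<delta>)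
      sequentially"
  proof eventually_elim
    case (elim k)
    have "padic_norm p (qform A a k - qform A (\<lambda>i k. of_int (a0 i)) k) \<le> B * (1 * \<eta>)"
      using B2 padic_norm_Ints_le_1[OF aI] padic_norm_of_int_le_1 elim
      by (intro padic_norm_qform_diff_le) (auto intro: less_imp_le)
    also have "\<dots> < \<delta>" using B(1) \<open>\<delta> > 0\<close> by (simp add: \<eta>_def)
    finally show ?case .
  qed
  then show ?thesis by (rule that)
qed

lemma padic_norm_det_le:
  fixes M :: "rat^'n::finite^'n"
  assumes M: "\<And>i j. padic_norm p (M $ i $ j) \<le> \<beta> j"
  shows "padic_norm p (det M) \<le> (\<Prod>j\<in>UNIV. \<beta> j)"
  unfolding det_def
proof (rule padic_norm_sum_le)
  have \<beta>: "0 \<le> \<beta> j" for j using order_trans[OF padic_norm_nonneg M] .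
  then show "0 \<le> (\<Prod>j\<in>UNIV. \<beta> j)" by (simp add: prod_nonneg)
  fix \<pi> assume "\<pi> \<in> {\<pi>. \<pi> permutes (UNIV :: 'n set)}"
  then have \<pi>: "\<pi> permutes (UNIV :: 'n set)" by simp
  have "padic_norm p (of_int (sign \<pi>) * (\<Prod>i\<in>UNIV. M $ i $ \<pi> i)) \<le> 1 * (\<Prod>i\<in>UNIV. \<beta> (\<pi> i))"
    unfolding padic_norm_mult padic_norm_prod using M \<beta>
    by (intro mult_mono prod_mono padic_norm_of_int_le_1) (auto simp: padic_norm_nonneg prod_nonneg)
  also have "(\<Prod>i\<in>UNIV. \<beta> (\<pi> i)) = (\<Prod>j\<in>UNIV. \<beta> j)"
    using prod.permute[OF \<pi>, of \<beta>] by simp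
  finally show "padic_norm p (of_int (sign \<pi>) * (\<Prod>i\<in>UNIV. M $ i $ \<pi> i)) \<le> (\<Prod>j\<in>UNIV. \<beta> j)"
    by simp
qed

lemma pnull_det_column:
  fixes M :: "'n::finite \<Rightarrow> 'n \<Rightarrow> nat \<Rightarrow> rat"
  assumes M: "\<And>i j. j \<noteq> j0 \<Longrightarrow> pbounded p (M i j)" and col: "\<And>i. pnull p (M i j0)"
  shows "pnull p (\<lambda>k. det (\<chi> i j. M i j k))"
proof -
  have "pbounded p (if snd ij = j0 then (\<lambda>k. 0) else case_prod M ij)" for ij
    using M by (simp add: split_beta)
  then obtain B where
    B0: "\<And>ij k. padic_norm p ((if snd ij = j0 then (\<lambda>k. 0) else case_prod M ij) k) \<le> B"
    using pbounded_uniform[of "\<lambda>ij. if snd ij = j0 then (\<lambda>k. 0) else case_prod M ij"] by blast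
  have B: "padic_norm p (M i j k) \<le> B" if "j \<noteq> j0" for i j k
    using B0[of "(i, j)" k] that by simp
  define w where "w k = (\<Sum>i\<in>UNIV. padic_norm p (M i j0 k))" for k
  define K where "K = (\<Prod>j\<in>UNIV - {j0}. B)"
  have bound: "padic_norm p (det (\<chi> i j. M i j k)) \<le> w k * K" for k
  proof -
    have "padic_norm p (det (\<chi> i j. M i j k)) \<le> (\<Prod>j\<in>UNIV. if j = j0 then w k else B)"
    proof (rule padic_norm_det_le)
      fix i j
      have "padic_norm p (M i j0 k) \<le> w k"
        unfolding w_def by (rule member_le_sum) (auto simp: padic_norm_nonneg)
      then show "padic_norm p ((\<chi> i j. M i j k) $ i $ j) \<le> (if j = j0 then w k else B)"
        using B[of j i k] by simp
    qed
    also have "\<dots> = w k * K"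
    proof -
      have "(\<Prod>j\<in>UNIV - {j0}. if j = j0 then w k else B) = K"
        unfolding K_def by (rule prod.cong) auto
      then show ?thesis
        using prod.remove[of UNIV j0 "\<lambda>j. if j = j0 then w k else B"] by simp
    qed
    finally show ?thesis .
  qed
  have "Zfun w sequentially"
    using col unfolding w_def pnull_iff_Zfun by (intro Zfun_sum) auto
  then have "Zfun (\<lambda>k. padic_norm p (det (\<chi> i j. M i j k))) sequentially"
  proof (rule Zfun_imp_Zfun[where K = K])
    have "0 \<le> w k" for k unfolding w_def by (simp add: sum_nonneg padic_norm_nonneg)
    then show "eventually (\<lambda>k. norm (padic_norm p (det (\<chi> i j. M i j k))) \<le> norm (w k) * K)
        sequentially"
      using bound by (intro always_eventually allI) (simp add: padic_norm_nonneg)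
  qed
  then show ?thesis unfolding pnull_iff_Zfun .
qed

lemma pnull_qdet_if_pnull_kernel:
  fixes A :: "'n::finite \<Rightarrow> 'n \<Rightarrow> nat \<Rightarrow> rat"
  assumes A: "\<And>i j. pbounded p (A i j)" and x: "pbounded_below p (x j0)"
    and Ax: "\<And>i. pnull p (\<lambda>k. \<Sum>j\<in>UNIV. A i j k * x j k)"
  shows "pnull p (qdet A)"
proof (rule pnull_cancel[OF x])
  define M where "M i j k = (if j = j0 then \<Sum>l\<in>UNIV. A i l k * x l k else A i j k)" for i j k
  have "pnull p (\<lambda>k. det (\<chi> i j. M i j k))"
    by (rule pnull_det_column[of j0]) (simp_all add: M_def A Ax)
  then show "pnull p (\<lambda>k. x j0 k * qdet A k)"
    by (simp add: M_def qdet_def det_replace_column_mult_vector)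
qed

lemma exists_polar_not_pnull:
  fixes A :: "'n::finite \<Rightarrow> 'n \<Rightarrow> nat \<Rightarrow> rat"
  assumes A: "\<And>i j. pcauchy p (A i j)" and sym: "\<And>i j. pnull p (\<lambda>k. A i j k - A j i k)"
    and x: "\<And>i. pcauchy p (x i)" and x0: "\<not> pnull p (x j0)"
    and det: "\<not> pnull p (qdet A)"
  shows "\<exists>j. \<not> pnull p (\<lambda>k. \<Sum>i\<in>UNIV. (A i j k + A j i k) * x i k)"
proof -
  obtain j where j: "\<not> pnull p (\<lambda>k. \<Sum>i\<in>UNIV. A j i k * x i k)"
    using pnull_qdet_if_pnull_kernel[of A x j0] pcauchy_imp_pbounded[OF A]
      pcauchy_pbounded_below[OF x x0] det by blast
  have skew: "pnull p (\<lambda>k. \<Sum>i\<in>UNIV. (A i j k - A j i k) * x i k)"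
    using sym pcauchy_imp_pbounded[OF x] by (intro pnull_sum pnull_mult_pbounded)
  have "\<not> pnull p (\<lambda>k. \<Sum>i\<in>UNIV. (A i j k + A j i k) * x i k)"
  proof
    assume "pnull p (\<lambda>k. \<Sum>i\<in>UNIV. (A i j k + A j i k) * x i k)"
    from pnull_cmult[OF pnull_diff[OF this skew], of "1 / 2"]
    have "pnull p (\<lambda>k. \<Sum>i\<in>UNIV. A j i k * x i k)"
      by (simp add: sum_subtractf[symmetric] sum_distrib_left algebra_simps)
    with j show False ..
  qed
  then show ?thesis ..
qed

lemma qform_represents:
  fixes A :: "'n::finite \<Rightarrow> 'n \<Rightarrow> nat \<Rightarrow> rat"
  assumes A: "\<And>i j. pcauchy p (A i j)" and x: "\<And>i. pcauchy p (x i)"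
    and Qx: "pnull p (qform A x)"
    and polar: "\<not> pnull p (\<lambda>k. \<Sum>i\<in>UNIV. (A i j k + A j i k) * x i k)"
    and T: "pcauchy p T"
  shows "\<exists>v. (\<forall>i. pcauchy p (v i)) \<and> pnull p (\<lambda>k. qform A v k - T k)"
proof -
  define c where "c k = (\<Sum>i\<in>UNIV. (A i j k + A j i k) * x i k)" for k
  have "pcauchy p c"
    unfolding c_def using A x by (intro pcauchy_sum pcauchy_mult pcauchy_add) auto
  then have c: "pbounded_below p c"
    using polar unfolding c_def by (rule pcauchy_pbounded_below)
  define t where "t k = (T k - A j j k) * inverse (c k)" for k
  define v where "v i k = t k * x i k + (if i = j then 1 else 0)" for i k
  have t: "pcauchy p t"
    unfolding t_def using T A \<open>pcauchy p c\<close> c by (intro pcauchy_mult pcauchy_diff pcauchy_inverse)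
  then have v: "pcauchy p (v i)" for i
    unfolding v_def using x by (intro pcauchy_add pcauchy_mult pcauchy_const)
  have "pnull p (\<lambda>k. (t k)\<^sup>2 * qform A x k)"
    using pbounded_mult_pnull[OF pcauchy_imp_pbounded[OF pcauchy_mult[OF t t]] Qx]
    by (simp add: power2_eq_square)
  moreover have "eventually (\<lambda>k. qform A v k - T k = (t k)\<^sup>2 * qform A x k) sequentially"
    using pbounded_below_eventually_nonzero[OF c]
  proof eventually_elim
    case (elim k)
    then have "t k * c k = T k - A j j k" by (simp add: t_def)
    then show ?case unfolding v_def qform_add_unit_vector c_def[symmetric] by simp
  qed
  ultimately have "pnull p (\<lambda>k. qform A v k - T k)" by (rule pnull_ssubst[rotated])
  then show ?thesis using v by blast
qed

lemma qform_Zp_represents_multiples: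
  fixes A :: "'n::finite \<Rightarrow> 'n \<Rightarrow> nat \<Rightarrow> rat"
  assumes "is_qform p A" "nonsingular p A" "isotropic p A" and q: "pcauchy p q"
  shows "\<exists>a b L. (\<forall>i. a i \<in> Zp p) \<and> (\<forall>i. b i \<in> Zp p) \<and> L \<noteq> 0
     \<and> pnull p (\<lambda>k. qform A a k - L * q k) \<and> pnull p (\<lambda>k. qform A b k - L)"
proof -
  have A: "\<And>i j. pcauchy p (A i j)" and sym: "\<And>i j. pnull p (\<lambda>k. A i j k - A j i k)"
    using assms(1) unfolding is_qform_def Qp_def peq_def by auto
  obtain x j0 where x: "\<And>i. pcauchy p (x i)" and x0: "\<not> pnull p (x j0)"
    and Qx: "pnull p (qform A x)"
    using assms(3) unfolding isotropic_def Qp_def by auto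
  obtain j where polar: "\<not> pnull p (\<lambda>k. \<Sum>i\<in>UNIV. (A i j k + A j i k) * x i k)"
    using exists_polar_not_pnull[of A x j0, OF A sym x x0] assms(2)
    unfolding nonsingular_def by blast
  obtain va where va: "\<And>i. pcauchy p (va i)" "pnull p (\<lambda>k. qform A va k - q k)"
    using qform_represents[OF A x Qx polar q] by blast
  obtain vb where vb: "\<And>i. pcauchy p (vb i)" "pnull p (\<lambda>k. qform A vb k - 1)"
    using qform_represents[OF A x Qx polar pcauchy_const] by blast
  \<comment> \<open>Scale both families by the same power of \<open>p\<close>, so that the quotient is unchanged.\<close>
  define v where "v = case_sum va vb"
  have "pcauchy p (v l)" for l by (cases l) (simp_all add: v_def va vb)
  then obtain M w where w: "\<And>l. w l \<in> Zp p" "\<And>l. pnull p (\<lambda>k. of_nat p ^ M * v l k - w l k)"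
    using pcauchy_scale_into_Zp[of v] by blast
  define s :: rat where "s = of_nat p ^ M"
  have w_cauchy: "pcauchy p (w l)" for l using w(1) unfolding Zp_def by simp
  have wa: "pnull p (\<lambda>k. s * va i k - w (Inl i) k)" and wb: "pnull p (\<lambda>k. s * vb i k - w (Inr i) k)"
    for i using w(2)[of "Inl i"] w(2)[of "Inr i"] by (simp_all add: v_def s_def)
  have "pnull p (\<lambda>k. qform A (\<lambda>i. w (Inl i)) k - s\<^sup>2 * q k)"
    by (rule qform_pnull_scale[of A va _ s]) (use A va w_cauchy wa in auto)
  moreover have "pnull p (\<lambda>k. qform A (\<lambda>i. w (Inr i)) k - s\<^sup>2 * 1)"
    by (rule qform_pnull_scale[of A vb _ s]) (use A vb w_cauchy wb in auto)
  moreover have "s\<^sup>2 \<noteq> 0" using prime_gt_0_nat[OF prime] by (simp add: s_def)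
  ultimately show ?thesis
    using w(1) by (intro exI[of _ "\<lambda>i. w (Inl i)"] exI[of _ "\<lambda>i. w (Inr i)"] exI[of _ "s\<^sup>2"]) simp
qed

lemma peq_pdiv_if_pnull:
  assumes q: "pcauchy p q" and L: "L \<noteq> 0"
    and U: "pnull p (\<lambda>k. U k - L * q k)" and V: "pnull p (\<lambda>k. V k - L)"
  shows "pbounded_below p V" and "peq p q (pdiv U V)"
proof -
  show V_below: "pbounded_below p V"
    using pbounded_below_perturb[OF pbounded_below_const[OF L]] pnull_minus[OF V] by simp
  have "pnull p (\<lambda>k. inverse (V k) * (q k * (V k - L) - (U k - L * q k)))"
    using pbounded_inverse[OF V_below]
      pnull_diff[OF pbounded_mult_pnull[OF pcauchy_imp_pbounded[OF q] V] U]
    by (rule pbounded_mult_pnull)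
  moreover have "eventually (\<lambda>k. q k - pdiv U V k =
      inverse (V k) * (q k * (V k - L) - (U k - L * q k))) sequentially"
    using pbounded_below_eventually_nonzero[OF V_below]
    by eventually_elim (simp add: pdiv_def field_simps)
  ultimately show "peq p q (pdiv U V)"
    unfolding peq_def by (rule pnull_ssubst[rotated])
qed

lemma padic_norm_quotient_error:
  assumes u: "padic_norm p (u - L * q) < \<delta>" and v: "padic_norm p (v - L) < \<delta>"
    and \<delta>: "\<delta> \<le> padic_norm p L" and q: "padic_norm p q \<le> C" and C: "1 \<le> C"
  shows "padic_norm p (q - u / v) \<le> C * \<delta> / padic_norm p L"
proof -
  have "padic_norm p (L - v) < padic_norm p L"
    using v \<delta> by (simp add: padic_norm_diff_commute)
  from padic_norm_eq_if_close[OF this] have v_norm: "padic_norm p v = padic_norm p L" .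
  have "0 < \<delta>" using u padic_norm_nonneg[of "u - L * q"] by linarith
  then have "0 < padic_norm p L" using \<delta> by linarith
  then have "v \<noteq> 0" using v_norm by auto
  then have "q - u / v = (q * (v - L) - (u - L * q)) / v" by (simp add: field_simps)
  moreover have "padic_norm p (q * (v - L) - (u - L * q)) \<le> C * \<delta>"
  proof (rule order_trans[OF padic_norm_diff_le_max max.boundedI])
    show "padic_norm p (q * (v - L)) \<le> C * \<delta>"
      unfolding padic_norm_mult using q v C by (intro mult_mono) (auto simp: padic_norm_nonneg)
    have "\<delta> \<le> C * \<delta>" using C \<open>0 < \<delta>\<close> by simp
    then show "padic_norm p (u - L * q) \<le> C * \<delta>" using u by linarith
  qed
  ultimately show ?thesis
    using \<open>0 < padic_norm p L\<close> by (simp add: padic_norm_divide v_norm divide_right_mono)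
qed

lemma Qp_norm_quotient_error:
  assumes q: "pcauchy p q" "\<And>k. padic_norm p (q k) \<le> C" "1 \<le> C"
    and U: "pcauchy p U" and V: "pcauchy p V"
    and close: "eventually (\<lambda>k. padic_norm p (U k - L * q k) < \<delta> \<and> padic_norm p (V k - L) < \<delta>)
      sequentially"
    and \<delta>: "0 < \<delta>" "\<delta> \<le> padic_norm p L"
  shows "pbounded_below p V" and "Qp_norm p (\<lambda>k. q k - pdiv U V k) \<le> C * \<delta> / padic_norm p L"
proof -
  from close have "eventually (\<lambda>k. padic_norm p L \<le> padic_norm p (V k)) sequentially"
  proof eventually_elim
    case (elim k)
    then have "padic_norm p (L - V k) < padic_norm p L"
      using \<delta>(2) by (simp add: padic_norm_diff_commute)
    from padic_norm_eq_if_close[OF this] show ?case by simp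
  qed
  moreover have "0 < padic_norm p L" using \<delta> by linarith
  ultimately show V_below: "pbounded_below p V" unfolding pbounded_below_def by blast
  have "pcauchy p (\<lambda>k. q k - pdiv U V k)"
    unfolding pdiv_def divide_inverse using q U V V_below
    by (intro pcauchy_diff pcauchy_mult pcauchy_inverse)
  moreover from close
  have "eventually (\<lambda>k. padic_norm p (q k - pdiv U V k) \<le> C * \<delta> / padic_norm p L) sequentially"
  proof eventually_elim
    case (elim k)
    then show ?case
      unfolding pdiv_def using padic_norm_quotient_error[OF _ _ \<delta>(2) q(2) q(3)] by blast
  qed
  ultimately show "Qp_norm p (\<lambda>k. q k - pdiv U V k) \<le> C * \<delta> / padic_norm p L"
    by (rule Qp_norm_le)
qed

lemma Zp_quotient_approx_by_integers:
  fixes A :: "'n::finite \<Rightarrow> 'n \<Rightarrow> nat \<Rightarrow> rat"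
  assumes A: "\<And>i j. pcauchy p (A i j)" and a: "\<And>i. a i \<in> Zp p" and b: "\<And>i. b i \<in> Zp p"
    and L: "L \<noteq> 0" and Ua: "pnull p (\<lambda>k. qform A a k - L * q k)"
    and Ub: "pnull p (\<lambda>k. qform A b k - L)" and q: "pcauchy p q" and e: "e > 0"
  shows "\<exists>a0 b0 :: 'n \<Rightarrow> int. \<not> pnull p (qform A (\<lambda>i k. of_int (b0 i)))
     \<and> Qp_norm p (\<lambda>k. q k - pdiv (qform A (\<lambda>i k. of_int (a0 i)))
                                    (qform A (\<lambda>i k. of_int (b0 i))) k) < e"
proof -
  obtain C0 where C0: "\<And>k. padic_norm p (q k) \<le> C0"
    using pcauchy_imp_pbounded[OF q] unfolding Bseq_def by (auto simp: padic_norm_nonneg)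
  define C where "C = max 1 C0"
  define l where "l = padic_norm p L"
  have l: "l > 0" unfolding l_def using padic_norm_pos[OF L] .
  define \<delta> where "\<delta> = min l (e * l / (2 * C))"
  have \<delta>: "\<delta> > 0" "\<delta> \<le> l" "C * \<delta> / l < e"
    using l e by (auto simp: \<delta>_def C_def min_def field_simps)
  have A_bounded: "\<And>i j. pbounded p (A i j)" using pcauchy_imp_pbounded[OF A] .
  obtain a0 where a0: "eventually (\<lambda>k.
      padic_norm p (qform A a k - qform A (\<lambda>i k. of_int (a0 i)) k) < \<delta>) sequentially"
    using qform_truncation[of A a, OF A_bounded a \<delta>(1)] by blast
  obtain b0 where b0: "eventually (\<lambda>k.
      padic_norm p (qform A b k - qform A (\<lambda>i k. of_int (b0 i)) k) < \<delta>) sequentially"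
    using qform_truncation[of A b, OF A_bounded b \<delta>(1)] by blast
  define U where "U = qform A (\<lambda>i k. of_int (a0 i))"
  define V where "V = qform A (\<lambda>i k. of_int (b0 i))"
  have UV: "pcauchy p U" "pcauchy p V"
    unfolding U_def V_def using A by (simp_all add: pcauchy_qform pcauchy_const)
  have C: "\<And>k. padic_norm p (q k) \<le> C" "1 \<le> C"
    using C0 by (auto simp: C_def intro: le_max_iff_disj[THEN iffD2])
  from a0 b0 pnull_eventually_less[OF Ua \<delta>(1)] pnull_eventually_less[OF Ub \<delta>(1)]
  have "eventually (\<lambda>k. padic_norm p (U k - L * q k) < \<delta> \<and> padic_norm p (V k - L) < \<delta>)
      sequentially"
  proof eventually_elim
    case (elim k)
    then have "padic_norm p (U k - qform A a k) < \<delta>" "padic_norm p (V k - qform A b k) < \<delta>"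
      unfolding U_def V_def by (simp_all only: padic_norm_diff_commute)
    with elim show ?case by (blast intro: padic_norm_diff_less_trans)
  qed
  from Qp_norm_quotient_error[OF q C(1,2) UV this \<delta>(1) \<delta>(2)[unfolded l_def]]
  have "pbounded_below p V" "Qp_norm p (\<lambda>k. q k - pdiv U V k) < e"
    using \<delta>(3) unfolding l_def by auto
  then show ?thesis
    using pbounded_below_imp_not_pnull unfolding U_def V_def by blast
qed

lemma qform_Zp_quotients_exhaust_Qp:
  fixes A :: "'n::finite \<Rightarrow> 'n \<Rightarrow> nat \<Rightarrow> rat"
  assumes "is_qform p A" "nonsingular p A" "isotropic p A" and "q \<in> Qp p"
  shows "\<exists>a b. (\<forall>i. a i \<in> Zp p) \<and> (\<forall>i. b i \<in> Zp p)
            \<and> \<not> pnull p (qform A b) \<and> peq p q (pdiv (qform A a) (qform A b))"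
proof -
  have q: "pcauchy p q" using assms(4) unfolding Qp_def by simp
  obtain a b L where ab: "\<forall>i. a i \<in> Zp p" "\<forall>i. b i \<in> Zp p" and L: "L \<noteq> 0"
    and Ua: "pnull p (\<lambda>k. qform A a k - L * q k)" and Ub: "pnull p (\<lambda>k. qform A b k - L)"
    using qform_Zp_represents_multiples[OF assms(1-3) q] by blast
  from peq_pdiv_if_pnull[OF q L Ua Ub]
  have "\<not> pnull p (qform A b)" "peq p q (pdiv (qform A a) (qform A b))"
    by (simp_all add: pbounded_below_imp_not_pnull)
  with ab show ?thesis by blast
qed

lemma qform_integer_quotients_dense:
  fixes A :: "'n::finite \<Rightarrow> 'n \<Rightarrow> nat \<Rightarrow> rat"
  assumes "is_qform p A" "nonsingular p A" "isotropic p A" and "q \<in> Qp p" and "e > 0"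
  shows "\<exists>a b :: 'n \<Rightarrow> int. \<not> pnull p (qform A (\<lambda>i k. of_int (b i)))
     \<and> Qp_norm p (\<lambda>k. q k - pdiv (qform A (\<lambda>i k. of_int (a i)))
                                    (qform A (\<lambda>i k. of_int (b i))) k) < e"
proof -
  have A: "\<And>i j. pcauchy p (A i j)" using assms(1) unfolding is_qform_def Qp_def by auto
  have q: "pcauchy p q" using assms(4) unfolding Qp_def by simp
  obtain a b L where ab: "\<forall>i. a i \<in> Zp p" "\<forall>i. b i \<in> Zp p" and L: "L \<noteq> 0"
    and Ua: "pnull p (\<lambda>k. qform A a k - L * q k)" and Ub: "pnull p (\<lambda>k. qform A b k - L)"
    using qform_Zp_represents_multiples[OF assms(1-3) q] by blast
  show ?thesis
    using ab by (intro Zp_quotient_approx_by_integers[of A a b L q e] A L Ua Ub q \<open>e > 0\<close>) auto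
qed

end

theorem corollary1:
  fixes p :: nat and A :: "'n::finite \<Rightarrow> 'n \<Rightarrow> nat \<Rightarrow> rat"
  assumes "prime p"
    and "is_qform p A"
    and "nonsingular p A"
    and "isotropic p A"
  shows "(\<forall>q\<in>Qp p. \<exists>a b. (\<forall>i. a i \<in> Zp p) \<and> (\<forall>i. b i \<in> Zp p)
            \<and> \<not> pnull p (qform A b) \<and> peq p q (pdiv (qform A a) (qform A b)))
     \<and> (\<forall>q\<in>Qp p. \<forall>e>0. \<exists>a b :: 'n \<Rightarrow> int.
            \<not> pnull p (qform A (\<lambda>i k. of_int (b i)))
            \<and> Qp_norm p (\<lambda>k. q k - pdiv (qform A (\<lambda>i k. of_int (a i))) (qform A (\<lambda>i k. of_int (b i))) k) < e)"
proof -
  interpret padic p using assms(1) by (rule padic.intro)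
  show ?thesis
    by (intro conjI ballI allI impI qform_Zp_quotients_exhaust_Qp[OF assms(2-4)]
        qform_integer_quotients_dense[OF assms(2-4)])
qed

end
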